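(* Let $\alpha,\beta,\gamma$ be real (e.g. $>-1$) and $\delta\neq\pm1$. For all $0\le k\le n$, $L_2\mathcal J_{n,k}=\nu_k\mathcal J_{n,k}$, where $\nu_k=2k$ if $k$ is even, $\nu_k=-2(k+\beta+\gamma+1)$ if $k$ is odd, and $$L_2=\frac{2(y-x)(x+\delta)}{x}R_x\partial_x+\frac{(\gamma+\beta+1)x^2+(\delta\gamma-\beta y)x+\delta y}{x^2}\,(R_x-\mathbb I).$$
   Context: $R_x f(x,y)=f(-x,y)$, $\mathbb I$ is the identity; products of operators are compositions (rightmost acts first), coefficients act by multiplication; the identity is between rational functions of $(x,y)$. For real $a,b$ and $c^2\neq1$, the Big $-1$ Jacobi polynomials are $$J_{n}(x;a,b,c)=\begin{cases}{}_2F_1\!\left(\begin{smallmatrix}-\frac n2,\ \frac{n+a+b+2}{2}\\ \frac{a+1}{2}\end{smallmatrix};\frac{1-x^2}{1-c^2}\right)+\frac{n(1-x)}{(1+c)(a+1)}\,{}_2F_1\!\left(\begin{smallmatrix}1-\frac n2,\ \frac{n+a+b+2}{2}\\ \frac{a+3}{2}\end{smallmatrix};\frac{1-x^2}{1-c^2}\right), & n\text{ even},\\[2mm] {}_2F_1\!\left(\begin{smallmatrix}-\frac{n-1}2,\ \frac{n+a+b+1}{2}\\ \frac{a+1}{2}\end{smallmatrix};\frac{1-x^2}{1-c^2}\right)-\frac{(n+a+b+1)(1-x)}{(1+c)(a+1)}\,{}_2F_1\!\left(\begin{smallmatrix}-\frac{n-1}2,\ \frac{n+a+b+3}{2}\\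 \frac{a+3}{2}\end{smallmatrix};\frac{1-x^2}{1-c^2}\right), & n\text{ odd}.\end{cases}$$ Let $\rho_k(y)=y^k(1-\delta^2/y^2)^{k/2}$ for $k$ even and $\rho_k(y)=y^k(1-\delta^2/y^2)^{(k-1)/2}(1+\delta/y)$ for $k$ odd, and $$\mathcal{J}_{n,k}(x,y)=J_{n-k}\big(y;\alpha,2k+\beta+\gamma+1,(-1)^k\delta\big)\,\rho_k(y)\,J_k\Big(\frac{x}{y};\gamma,\beta,\frac{\delta}{y}\Big).$$ *)

theory Defs
  imports "HOL-Analysis.Analysis"
begin

definition hyp2F1 :: "real \<Rightarrow> real \<Rightarrow> real \<Rightarrow> real \<Rightarrow> real" where
  "hyp2F1 a b c z = (\<Sum>m. pochhammer a m * pochhammer b m / (pochhammer c m * fact m) * z ^ m)"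

definition bigJ :: "nat \<Rightarrow> real \<Rightarrow> real \<Rightarrow> real \<Rightarrow> real \<Rightarrow> real" where
  "bigJ n x a b c =
    (let z = (1 - x^2) / (1 - c^2) in
     if even n then
       hyp2F1 (- real n / 2) ((real n + a + b + 2) / 2) ((a + 1) / 2) z
       + real n * (1 - x) / ((1 + c) * (a + 1)) *
         hyp2F1 (1 - real n / 2) ((real n + a + b + 2) / 2) ((a + 3) / 2) z
     else
       hyp2F1 (- (real n - 1) / 2) ((real n + a + b + 1) / 2) ((a + 1) / 2) z
       - (real n + a + b + 1) * (1 - x) / ((1 + c) * (a + 1)) *
         hyp2F1 (- (real n - 1) / 2) ((real n + a + b + 3) / 2) ((a + 3) / 2) z)"

definition rho :: "real \<Rightarrow> nat \<Rightarrow> real \<Rightarrow> real" where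
  "rho \<delta> k y =
    (if even k then y ^ k * (1 - \<delta>^2 / y^2) ^ (k div 2)
     else y ^ k * (1 - \<delta>^2 / y^2) ^ ((k - 1) div 2) * (1 + \<delta> / y))"

definition calJ :: "real \<Rightarrow> real \<Rightarrow> real \<Rightarrow> real \<Rightarrow> nat \<Rightarrow> nat \<Rightarrow> real \<Rightarrow> real \<Rightarrow> real" where
  "calJ \<alpha> \<beta> \<gamma> \<delta> n k x y =
    bigJ (n - k) y \<alpha> (2 * real k + \<beta> + \<gamma> + 1) ((-1) ^ k * \<delta>)
    * rho \<delta> k y * bigJ k (x / y) \<gamma> \<beta> (\<delta> / y)"

text \<open>The operator L_2 applied to f at (x,y); R_x d_x f (x,y) = (d_x f)(-x,y).\<close>
definition L2 :: "real \<Rightarrow> real \<Rightarrow> real \<Rightarrow> (real \<Rightarrow> real \<Rightarrow> real) \<Rightarrow> real \<Rightarrow> real \<Rightarrow> real" where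
  "L2 \<beta> \<gamma> \<delta> f x y =
    2 * (y - x) * (x + \<delta>) / x * deriv (\<lambda>t. f t y) (- x)
    + ((\<gamma> + \<beta> + 1) * x^2 + (\<delta> * \<gamma> - \<beta> * y) * x + \<delta> * y) / x^2 * (f (- x) y - f x y)"

definition nu :: "real \<Rightarrow> real \<Rightarrow> nat \<Rightarrow> real" where
  "nu \<beta> \<gamma> k = (if even k then 2 * real k else - 2 * (real k + \<beta> + \<gamma> + 1))"

end

theory Submission
  imports Defs "HOL-Computational_Algebra.Polynomial"
begin

text \<open>
  With u = x/y and q = delta/y the operator L2 is homogeneous of degree zero, so on
  calJ = A(y) J_k(x/y) it acts on the second factor only, as the same operator at y = 1 with
  parameter q. In the variable z = (1 - u^2)/(1 - q^2) the polynomial J_k(u; gamma, beta, q) is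
  P(z) + (1 - u) R(z)/(1 + q) with P = 2F1(a, b; c; z) and R = -(a/c) 2F1(a + 1, b; c + 1; z),
  one of a, b being a nonpositive integer. Read coefficientwise, two contiguous relations of 2F1
  say that (P, R) solve a first-order linear system; using it to eliminate P' and f P turns the
  eigenvalue equation into an identity, with eigenvalue -4a = nu_k.
\<close>

definition hyp_coeff :: "real \<Rightarrow> real \<Rightarrow> real \<Rightarrow> nat \<Rightarrow> real" where
  "hyp_coeff a b c m = pochhammer a m * pochhammer b m / (pochhammer c m * fact m)"

lemma hyp2F1_altdef: "hyp2F1 a b c z = (\<Sum>m. hyp_coeff a b c m * z ^ m)"
  unfolding hyp2F1_def hyp_coeff_def ..

lemma hyp_coeff_commute: "hyp_coeff a b c = hyp_coeff b a c"
  unfolding hyp_coeff_def by (simp add: mult.commute)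

lemma hyp2F1_commute: "hyp2F1 a b c = hyp2F1 b a c"
  unfolding hyp2F1_altdef hyp_coeff_commute[of a b] ..

lemma hyp_coeff_Suc_contiguous:
  "of_nat (Suc m) * hyp_coeff a b c (Suc m) = a / c * (b + of_nat m) * hyp_coeff (a + 1) b (c + 1) m"
proof -
  have "of_nat (Suc m) * hyp_coeff a b c (Suc m)
      = of_nat (Suc m) * ((a * (b + of_nat m) * (pochhammer (a + 1) m * pochhammer b m))
          / (of_nat (Suc m) * (c * (pochhammer (c + 1) m * fact m))))"
    unfolding hyp_coeff_def pochhammer_rec[of a] pochhammer_rec[of c] pochhammer_Suc[of b] fact_Suc of_nat_mult
    by (simp only: ac_simps)
  also have "\<dots> = a / c * (b + of_nat m) * hyp_coeff (a + 1) b (c + 1) m"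
    unfolding hyp_coeff_def by (simp del: of_nat_Suc)
  finally show ?thesis .
qed

lemma hyp_coeff_contiguous:
  assumes "c > 0"
  shows "(a + of_nat m) * hyp_coeff a b c m = a / c * (c + of_nat m) * hyp_coeff (a + 1) b (c + 1) m"
proof -
  have shift: "x * pochhammer (x + 1) m = pochhammer x m * (x + of_nat m)" for x :: real
    by (metis pochhammer_Suc pochhammer_rec)
  have "(a + of_nat m) * hyp_coeff a b c m
      = a * pochhammer (a + 1) m * pochhammer b m / (pochhammer c m * fact m)"
    unfolding hyp_coeff_def shift by (simp add: ac_simps)
  also have "\<dots> = a * pochhammer (a + 1) m * pochhammer b m * (c + of_nat m)
      / ((pochhammer c m * (c + of_nat m)) * fact m)"
    using assms by simp
  also have "\<dots> = a / c * (c + of_nat m) * hyp_coeff (a + 1) b (c + 1) m"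
    unfolding shift[of c, symmetric] hyp_coeff_def by (simp add: ac_simps)
  finally show ?thesis .
qed

lemma hyp_coeff_eq_0:
  assumes "pochhammer a N * pochhammer b N = 0" and "N \<le> m"
  shows "hyp_coeff a b c m = 0"
  using assms by (auto simp: hyp_coeff_def dest: pochhammer_eq_0_mono)

lemma hyp_coeff_shift_eq_0:
  assumes "pochhammer a N * pochhammer b N = 0" and "N \<le> m"
  shows "a * hyp_coeff (a + 1) b (c + 1) m = 0"
proof -
  have "pochhammer a (Suc m) = 0 \<or> pochhammer b m = 0"
    using assms pochhammer_eq_0_mono[of a N "Suc m"] pochhammer_eq_0_mono[of b N m] by auto
  then show ?thesis by (auto simp: hyp_coeff_def pochhammer_rec)
qed

definition hyp_poly :: "nat \<Rightarrow> real \<Rightarrow> real \<Rightarrow> real \<Rightarrow> real poly" where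
  "hyp_poly N a b c = (\<Sum>m<N. monom (hyp_coeff a b c m) m)"

lemma coeff_hyp_poly: "coeff (hyp_poly N a b c) m = (if m < N then hyp_coeff a b c m else 0)"
  by (simp add: hyp_poly_def coeff_sum)

lemma hyp2F1_eq_poly_hyp_poly:
  assumes "\<And>m. N \<le> m \<Longrightarrow> hyp_coeff a b c m = 0"
  shows "hyp2F1 a b c z = poly (hyp_poly N a b c) z"
  unfolding hyp2F1_altdef hyp_poly_def poly_sum poly_monom
  by (rule suminf_finite) (use assms in auto)

definition contiguous_system :: "real poly \<Rightarrow> real poly \<Rightarrow> real \<Rightarrow> real \<Rightarrow> real \<Rightarrow> bool" where
  "contiguous_system P R e f c \<longleftrightarrow>
     pderiv P + [:0, 1:] * pderiv R + smult e R = 0 \<and>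
     [:0, 1:] * (pderiv P + pderiv R) + smult c R + smult f P = 0"

lemma contiguous_system_iff_coeff:
  "contiguous_system P R e f c \<longleftrightarrow>
     (\<forall>m. of_nat (Suc m) * coeff P (Suc m) + (of_nat m + e) * coeff R m = 0) \<and>
     (\<forall>m. (of_nat m + f) * coeff P m + (of_nat m + c) * coeff R m = 0)"
proof -
  have "coeff (pderiv P + [:0, 1:] * pderiv R + smult e R) m
      = of_nat (Suc m) * coeff P (Suc m) + (of_nat m + e) * coeff R m" for m
    by (cases m) (simp_all add: coeff_pderiv algebra_simps)
  moreover have "coeff ([:0, 1:] * (pderiv P + pderiv R) + smult c R + smult f P) m
      = (of_nat m + f) * coeff P m + (of_nat m + c) * coeff R m" for m
    by (cases m) (simp_all add: coeff_pderiv algebra_simps)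
  ultimately show ?thesis
    unfolding contiguous_system_def poly_eq_iff coeff_0 by (simp only:)
qed

lemma contiguous_system_hyp_poly:
  assumes c: "c > 0" and terminating: "pochhammer a N * pochhammer b N = 0"
  shows "contiguous_system (hyp_poly N a b c) (smult (- (a / c)) (hyp_poly N (a + 1) b (c + 1))) b a c"
  unfolding contiguous_system_iff_coeff coeff_smult coeff_hyp_poly
proof (intro conjI allI)
  fix m
  have "of_nat (Suc m) * hyp_coeff a b c (Suc m) = a / c * (of_nat m + b) * hyp_coeff (a + 1) b (c + 1) m"
    using hyp_coeff_Suc_contiguous[of m a b c] by (simp add: add.commute)
  moreover have "hyp_coeff a b c (Suc m) = 0" if "\<not> Suc m < N"
    using hyp_coeff_eq_0[OF terminating] that by simp
  ultimately show "of_nat (Suc m) * (if Suc m < N then hyp_coeff a b c (Suc m) else 0)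
      + (of_nat m + b) * (- (a / c) * (if m < N then hyp_coeff (a + 1) b (c + 1) m else 0)) = 0"
    by (cases "Suc m < N"; cases "m < N") auto
  have "(of_nat m + a) * hyp_coeff a b c m = a / c * (of_nat m + c) * hyp_coeff (a + 1) b (c + 1) m"
    using hyp_coeff_contiguous[OF c, of a m b] by (simp add: add.commute)
  then show "(of_nat m + a) * (if m < N then hyp_coeff a b c m else 0)
      + (of_nat m + c) * (- (a / c) * (if m < N then hyp_coeff (a + 1) b (c + 1) m else 0)) = 0"
    by auto
qed

lemma hyp2F1_shift_eq_poly_hyp_poly:
  assumes "pochhammer a N * pochhammer b N = 0"
  shows "a * hyp2F1 (a + 1) b (c + 1) z = a * poly (hyp_poly N (a + 1) b (c + 1)) z"
proof (cases "a = 0")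
  case False
  with hyp_coeff_shift_eq_0[OF assms] have "hyp_coeff (a + 1) b (c + 1) m = 0" if "N \<le> m" for m
    using that by simp
  then show ?thesis by (simp add: hyp2F1_eq_poly_hyp_poly)
qed simp

definition jacobi_arg :: "real \<Rightarrow> real \<Rightarrow> real" where
  "jacobi_arg q v = (1 - v\<^sup>2) / (1 - q\<^sup>2)"

lemma jacobi_arg_minus [simp]: "jacobi_arg q (- v) = jacobi_arg q v"
  by (simp add: jacobi_arg_def)

text \<open>For odd k the upper parameters of the series in bigJ are swapped, so that both parities
  take the same shape; the terminating parameter is a for even k and b for odd k.\<close>

lemma bigJ_hyp2F1_form:
  assumes c: "\<gamma> + 1 = 2 * c"
  obtains a b where
    "\<And>v. bigJ k v \<gamma> \<beta> q = hyp2F1 a b c (jacobi_arg q v)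
        - a / c * (1 - v) / (1 + q) * hyp2F1 (a + 1) b (c + 1) (jacobi_arg q v)"
    and "a + b = (\<gamma> + \<beta> + 2) / 2" and "nu \<beta> \<gamma> k = - 4 * a"
    and "pochhammer a (Suc (k div 2)) * pochhammer b (Suc (k div 2)) = 0"
proof -
  have params: "(\<gamma> + 1) / 2 = c" "(\<gamma> + 3) / 2 = c + 1"
    using c by simp_all
  show ?thesis
  proof (cases "even k")
    case True
    then obtain j where k: "k = 2 * j" by blast
    show ?thesis
    proof (rule that[of "- real j" "(real k + \<gamma> + \<beta> + 2) / 2"])
      fix v
      have even_params: "- real k / 2 = - real j" "1 - real k / 2 = - real j + 1"
          "real k * (1 - v) / ((1 + q) * (2 * c)) = real j / c * (1 - v) / (1 + q)"
        using k by simp_all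
      show "bigJ k v \<gamma> \<beta> q = hyp2F1 (- real j) ((real k + \<gamma> + \<beta> + 2) / 2) c (jacobi_arg q v)
          - - real j / c * (1 - v) / (1 + q)
            * hyp2F1 (- real j + 1) ((real k + \<gamma> + \<beta> + 2) / 2) (c + 1) (jacobi_arg q v)"
        unfolding bigJ_def Let_def jacobi_arg_def params c even_params using True by simp
    qed (use k pochhammer_of_nat_eq_0_lemma[of j "Suc j", where 'a = real] in \<open>simp_all add: nu_def field_simps\<close>)
  next
    case False
    then obtain j where k: "k = 2 * j + 1" using oddE by blast
    define a where "a = (real k + \<gamma> + \<beta> + 1) / 2"
    show ?thesis
    proof (rule that[of a "- real j"])
      fix v
      have odd_params: "- (real k - 1) / 2 = - real j" "(real k + \<gamma> + \<beta> + 3) / 2 = a + 1"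
          "(real k + \<gamma> + \<beta> + 1) / 2 = a"
          "(real k + \<gamma> + \<beta> + 1) * (1 - v) / ((1 + q) * (2 * c)) = a / c * (1 - v) / (1 + q)"
        using k by (simp_all add: a_def)
      show "bigJ k v \<gamma> \<beta> q = hyp2F1 a (- real j) c (jacobi_arg q v)
          - a / c * (1 - v) / (1 + q) * hyp2F1 (a + 1) (- real j) (c + 1) (jacobi_arg q v)"
        unfolding bigJ_def Let_def jacobi_arg_def params c odd_params using False
        by (simp add: hyp2F1_commute[of "- real j"])
    qed (use k pochhammer_of_nat_eq_0_lemma[of j "Suc j", where 'a = real] in \<open>simp_all add: a_def nu_def field_simps\<close>)
  qed
qed

definition jacobi_form :: "real poly \<Rightarrow> real poly \<Rightarrow> real \<Rightarrow> real \<Rightarrow> real" where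
  "jacobi_form P R q v = poly P (jacobi_arg q v) + (1 - v) * poly R (jacobi_arg q v) / (1 + q)"

lemma bigJ_eq_jacobi_form:
  assumes "\<gamma> > -1"
  obtains P R e f c where "\<And>v. bigJ k v \<gamma> \<beta> q = jacobi_form P R q v"
    and "contiguous_system P R e f c"
    and "\<gamma> + 1 = 2 * c" and "\<gamma> + \<beta> + 2 = 2 * (e + f)" and "nu \<beta> \<gamma> k = - 4 * f"
proof -
  define c where "c = (\<gamma> + 1) / 2"
  define N where "N = Suc (k div 2)"
  have c_pos: "c > 0" and c: "\<gamma> + 1 = 2 * c" using assms by (simp_all add: c_def)
  obtain a b where J: "\<And>v. bigJ k v \<gamma> \<beta> q = hyp2F1 a b c (jacobi_arg q v)
        - a / c * (1 - v) / (1 + q) * hyp2F1 (a + 1) b (c + 1) (jacobi_arg q v)"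
    and ab: "a + b = (\<gamma> + \<beta> + 2) / 2" and nu: "nu \<beta> \<gamma> k = - 4 * a"
    and terminating: "pochhammer a N * pochhammer b N = 0"
    using bigJ_hyp2F1_form[OF c] unfolding N_def by blast
  define R where "R = smult (- (a / c)) (hyp_poly N (a + 1) b (c + 1))"
  show ?thesis
  proof (rule that[of "hyp_poly N a b c" R b a c])
    fix v
    have "a * hyp2F1 (a + 1) b (c + 1) (jacobi_arg q v) = a * poly (hyp_poly N (a + 1) b (c + 1)) (jacobi_arg q v)"
      by (rule hyp2F1_shift_eq_poly_hyp_poly[OF terminating])
    then show "bigJ k v \<gamma> \<beta> q = jacobi_form (hyp_poly N a b c) R q v"
      unfolding J jacobi_form_def R_def
      using hyp2F1_eq_poly_hyp_poly[of N a b c] hyp_coeff_eq_0[OF terminating]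
      by (simp add: mult_ac) blast
  qed (use contiguous_system_hyp_poly[OF c_pos terminating] c ab nu in \<open>simp_all add: R_def\<close>)
qed

lemma jacobi_form_has_real_derivative:
  "(jacobi_form P R q has_real_derivative
      poly (pderiv P) (jacobi_arg q v) * (- 2 * v / (1 - q\<^sup>2))
      + ((1 - v) * (poly (pderiv R) (jacobi_arg q v) * (- 2 * v / (1 - q\<^sup>2))) - poly R (jacobi_arg q v)) / (1 + q))
    (at v)"
proof -
  have "((\<lambda>v. 1 - v\<^sup>2) has_real_derivative - 2 * v) (at v)"
    by (auto intro!: derivative_eq_intros)
  then have arg: "(jacobi_arg q has_real_derivative - 2 * v / (1 - q\<^sup>2)) (at v)"
    unfolding jacobi_arg_def[abs_def] by (rule DERIV_cdivide)
  have "((\<lambda>v. (1 - v) * poly R (jacobi_arg q v)) has_real_derivative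
      (1 - v) * (poly (pderiv R) (jacobi_arg q v) * (- 2 * v / (1 - q\<^sup>2))) - poly R (jacobi_arg q v)) (at v)"
    by (auto intro!: derivative_eq_intros arg)
  then show ?thesis
    unfolding jacobi_form_def[abs_def] by (intro DERIV_add DERIV_chain2[OF poly_DERIV arg] DERIV_cdivide)
qed

lemma jacobi_arg_split:
  assumes "q \<noteq> 1" and "q \<noteq> -1"
  shows "(1 - u) * (u + q) / (1 - q\<^sup>2) = jacobi_arg q u - (1 - u) / (1 + q)"
proof -
  have D: "1 - q\<^sup>2 = (1 + q) * (1 - q)" "1 - q\<^sup>2 \<noteq> 0"
    using assms by (simp_all add: algebra_simps power2_eq_square) (simp add: square_eq_1_iff)
  have "(1 - u) * (u + q) = (1 - u\<^sup>2) - (1 - u) * (1 - q)"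
    by (simp add: algebra_simps power2_eq_square)
  then show ?thesis
    unfolding jacobi_arg_def using D assms by (simp add: diff_divide_distrib)
qed

lemma contiguous_eigen_identity:
  fixes u q P P1 R R1 :: real
  defines "z \<equiv> jacobi_arg q u"
  assumes u: "u \<noteq> 0" and q: "q \<noteq> 1" "q \<noteq> -1"
    and first: "P1 + z * R1 + e * R = 0" and second: "z * P1 + z * R1 + c * R + f * P = 0"
    and \<gamma>: "\<gamma> + 1 = 2 * c" and \<beta>: "\<gamma> + \<beta> + 2 = 2 * (e + f)"
  shows "2 * (1 - u) * (u + q) / u * (P1 * (2 * u / (1 - q\<^sup>2)) + ((1 + u) * (R1 * (2 * u / (1 - q\<^sup>2))) - R) / (1 + q))
      + ((\<gamma> + \<beta> + 1) * u\<^sup>2 + (q * \<gamma> - \<beta>) * u + q) / u\<^sup>2 * (2 * u * R / (1 + q))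
    = - 4 * f * (P + (1 - u) * R / (1 + q))"
    (is "?lhs = ?rhs")
proof -
  define K where "K = (\<gamma> + \<beta> + 1) * u\<^sup>2 + (q * \<gamma> - \<beta>) * u + q"
  have w: "1 + q \<noteq> 0" and D: "1 - q\<^sup>2 \<noteq> 0"
    using q by (simp_all add: power2_eq_1_iff add_eq_0_iff)
  have K: "K - (1 - u) * (u + q) = 2 * u * ((e + f) * (u - 1) + c * (1 + q))"
  proof -
    have \<gamma>\<beta>: "\<gamma> = 2 * c - 1" "\<beta> = 2 * (e + f) - 2 * c - 1" using \<gamma> \<beta> by linarith+
    show ?thesis unfolding K_def \<gamma>\<beta> by (simp add: algebra_simps power2_eq_square)
  qed
  have "?lhs = 4 * ((1 - u) * (u + q) / (1 - q\<^sup>2)) * P1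
      + 4 * ((1 - u) * (1 + u) / (1 - q\<^sup>2)) * (u + q) * R1 / (1 + q)
      + 2 * R / (u * (1 + q)) * (K - (1 - u) * (u + q))"
    unfolding K_def using u w D
    by (simp add: divide_simps power2_eq_square) (simp add: algebra_simps)
  also have "\<dots> = 4 * (z - (1 - u) / (1 + q)) * P1 + 4 * z * (u + q) * R1 / (1 + q)
      + 4 * R * ((e + f) * (u - 1) + c * (1 + q)) / (1 + q)"
  proof -
    have "(1 - u) * (1 + u) / (1 - q\<^sup>2) = z"
      unfolding z_def jacobi_arg_def by (simp add: algebra_simps power2_eq_square)
    then show ?thesis
      unfolding jacobi_arg_split[OF q, of u, folded z_def] K using u by simp
  qed
  also have "\<dots> = ?rhs"
    \<comment> \<open>the difference is -4 (1 - u)/(1 + q) times the first equation; 1 + q is kept as an atom w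
      so that field_simps does not expand its powers\<close>
  proof -
    obtain w where w_def: "1 + q = w" by simp
    then have "w \<noteq> 0" and q_def: "q = w - 1" using w by auto
    have P1: "P1 = - (z * R1) - e * R" using first by linarith
    show ?thesis
      unfolding P1 w_def unfolding q_def using \<open>w \<noteq> 0\<close> second P1
      by (simp add: field_simps) algebra
  qed
  finally show ?thesis .
qed

lemma L2_jacobi_form:
  assumes sys: "contiguous_system P R e f c"
    and \<gamma>: "\<gamma> + 1 = 2 * c" and \<beta>: "\<gamma> + \<beta> + 2 = 2 * (e + f)"
    and q: "q \<noteq> 1" "q \<noteq> -1" and u: "u \<noteq> 0"
  shows "L2 \<beta> \<gamma> q (\<lambda>t _. jacobi_form P R q t) u 1 = - 4 * f * jacobi_form P R q u"
proof -
  define z where "z = jacobi_arg q u"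
  have first: "poly (pderiv P) z + z * poly (pderiv R) z + e * poly R z = 0"
    using arg_cong[where f = "\<lambda>p. poly p z", OF conjunct1[OF sys[unfolded contiguous_system_def]]]
    by simp
  have second: "z * poly (pderiv P) z + z * poly (pderiv R) z + c * poly R z + f * poly P z = 0"
    using arg_cong[where f = "\<lambda>p. poly p z", OF conjunct2[OF sys[unfolded contiguous_system_def]]]
    by (simp add: algebra_simps)
  have "deriv (jacobi_form P R q) (- u)
      = poly (pderiv P) z * (2 * u / (1 - q\<^sup>2))
        + ((1 + u) * (poly (pderiv R) z * (2 * u / (1 - q\<^sup>2))) - poly R z) / (1 + q)"
    using DERIV_imp_deriv[OF jacobi_form_has_real_derivative[of P R q "- u"]] by (simp add: z_def)
  moreover have "jacobi_form P R q (- u) - jacobi_form P R q u = 2 * u * poly R z / (1 + q)"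
    unfolding jacobi_form_def z_def by (simp add: add_divide_distrib diff_divide_distrib algebra_simps)
  ultimately show ?thesis
    using contiguous_eigen_identity[OF u q first[unfolded z_def] second[unfolded z_def] \<gamma> \<beta>]
    unfolding L2_def jacobi_form_def[of P R q u] z_def by simp
qed

lemma bigJ_differentiable:
  assumes "\<gamma> > -1"
  shows "(\<lambda>v. bigJ k v \<gamma> \<beta> q) differentiable (at v)"
proof -
  obtain P R where "\<And>v. bigJ k v \<gamma> \<beta> q = jacobi_form P R q v"
    using bigJ_eq_jacobi_form[OF assms, of k \<beta> q] by blast
  then have "(\<lambda>v. bigJ k v \<gamma> \<beta> q) = jacobi_form P R q" by blast
  then show ?thesis
    unfolding real_differentiable_def by (metis jacobi_form_has_real_derivative)
qed

lemma bigJ_L2_eigen: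
  assumes "\<gamma> > -1" and "q \<noteq> 1" and "q \<noteq> -1" and "u \<noteq> 0"
  shows "L2 \<beta> \<gamma> q (\<lambda>t _. bigJ k t \<gamma> \<beta> q) u 1 = nu \<beta> \<gamma> k * bigJ k u \<gamma> \<beta> q"
proof -
  obtain P R e f c where J: "\<And>v. bigJ k v \<gamma> \<beta> q = jacobi_form P R q v"
    and "contiguous_system P R e f c" "\<gamma> + 1 = 2 * c" "\<gamma> + \<beta> + 2 = 2 * (e + f)"
    and nu: "nu \<beta> \<gamma> k = - 4 * f"
    using bigJ_eq_jacobi_form[OF assms(1), of k \<beta> q] by blast
  then show ?thesis
    using L2_jacobi_form[of P R e f c \<gamma> \<beta> q u] assms(2-4) by (simp add: J nu)
qed

lemma L2_homogeneous:
  assumes y: "y \<noteq> 0" and f: "\<And>t. f t y = A * g (t / y)"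
    and g: "g differentiable (at (- x / y))"
  shows "L2 \<beta> \<gamma> \<delta> f x y = A * L2 \<beta> \<gamma> (\<delta> / y) (\<lambda>t _. g t) (x / y) 1"
proof -
  have "((\<lambda>t. t / y) has_real_derivative 1 / y) (at (- x))"
    using y by (auto intro!: derivative_eq_intros)
  from DERIV_cmult[OF DERIV_chain2[OF g[unfolded DERIV_deriv_iff_real_differentiable[symmetric]] this], of A]
  have deriv: "deriv (\<lambda>t. A * g (t / y)) (- x) = A * (deriv g (- x / y) * (1 / y))"
    by (rule DERIV_imp_deriv)
  show ?thesis \<comment> \<open>for x = 0 both sides are 0, since division by 0 gives 0\<close>
    unfolding L2_def f deriv using y
    by (cases "x = 0") (simp_all add: field_simps power2_eq_square)
qed

theorem proposition3p1:
  fixes \<alpha> \<beta> \<gamma> \<delta> x y :: real and n k :: nat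
  assumes "\<alpha> > -1" and "\<beta> > -1" and "\<gamma> > -1"
    and "\<delta> \<noteq> 1" and "\<delta> \<noteq> -1"
    and "k \<le> n"
    and "x \<noteq> 0" and "y \<noteq> 0" and "y \<noteq> \<delta>" and "y \<noteq> - \<delta>"
  shows "L2 \<beta> \<gamma> \<delta> (calJ \<alpha> \<beta> \<gamma> \<delta> n k) x y = nu \<beta> \<gamma> k * calJ \<alpha> \<beta> \<gamma> \<delta> n k x y"
proof -
  define A where "A = bigJ (n - k) y \<alpha> (2 * real k + \<beta> + \<gamma> + 1) ((-1) ^ k * \<delta>) * rho \<delta> k y"
  have q: "\<delta> / y \<noteq> 1" "\<delta> / y \<noteq> -1" and u: "x / y \<noteq> 0"
    using assms(7-10) by (auto simp: field_simps)
  have "L2 \<beta> \<gamma> \<delta> (calJ \<alpha> \<beta> \<gamma> \<delta> n k) x y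
      = A * L2 \<beta> \<gamma> (\<delta> / y) (\<lambda>t _. bigJ k t \<gamma> \<beta> (\<delta> / y)) (x / y) 1"
    by (rule L2_homogeneous) (simp_all add: calJ_def A_def assms(3,8) bigJ_differentiable)
  also have "\<dots> = A * (nu \<beta> \<gamma> k * bigJ k (x / y) \<gamma> \<beta> (\<delta> / y))"
    using bigJ_L2_eigen[OF assms(3) q u] by simp
  also have "\<dots> = nu \<beta> \<gamma> k * calJ \<alpha> \<beta> \<gamma> \<delta> n k x y"
    by (simp add: calJ_def A_def)
  finally show ?thesis .
qed

end
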